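(* Let $K\ge2$, $a,b\ge1$ be integers. For any scheme with uncoded cache placement for the $(K,a,b)$ coded caching problem for location-based content, with load $R$, one has $$R\ \ge\ \frac{K-1}{aK}\,\alpha_0+\frac{1}{bK}\,\beta_0+\frac{K-1}{2aK}\,\alpha_1 .$$
   Context: For integers $x\le y$, $[x:y]=\{x,x+1,\dots,y\}$ and $[n]=[1:n]$. For integers $c$ and $m\ge1$, $\langle c\rangle_m$ denotes the unique element of $\{1,\dots,m\}$ congruent to $c$ modulo $m$. The $(K,a,b)$ coded caching problem for location-based content: a server has $N=K(a+b)$ files $W_1,\dots,W_N$, each consisting of $B$ independent uniformly distributed bits. There are $K$ cache nodes, each storing $MB$ bits, and $K$ users, user $k$ having free access to cache node $k$ only. For $k\in[K]$ define $\mathcal D_{k,1}=[(k-1)(a+b)+1:ka+(k-1)b]$, $\mathcal D_{k,2}=[ka+(k-1)b+1:k(a+b)]$, $\mathcal D_{k,3}=\mathcal D_{\langle k+1\rangle_K,1}$, and $\mathcal D_k=\mathcal D_{k,1}\cup\mathcal D_{k,2}\cup\mathcal D_{k,3}$. A scheme consists of placement $Z_k=\phi_k(W_1,\dots,W_N)\in\{0,1\}^{MB}$ (fixed before demands), for each demand vector $\mathbf d\in\mathcal D_1\times\cdots\times\mathcal D_K$ a broadcast message $X=\psi(\mathbf d,W_1,\dots,W_N)\in\{0,1\}^{RB}$, and decoders such that user $k$ recovers $W_{d_k}$ exactly from $(\mathbf d,Z_k,X)$. The placement is uncoded if each $Z_k$ is a subset of the file bits copied directly. For uncoded placement, for $i\in[N]$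 and $\mathcal T\subseteq[K]$, $W_{i,\mathcal T}$ denotes the set of bits of $W_i$ stored in exactly the cache nodes in $\mathcal T$ (and in no other cache node), and $|W_{i,\mathcal T}|$ its number of bits. Let $\mathcal C_1=\bigcup_{k\in[K]}\mathcal D_{k,1}$, $\mathcal C_2=\bigcup_{k\in[K]}\mathcal D_{k,2}$, and define $\alpha_0=\sum_{i\in\mathcal C_1}|W_{i,\emptyset}|/B$, $\beta_0=\sum_{i\in\mathcal C_2}|W_{i,\emptyset}|/B$, $\alpha_1=\sum_{i\in\mathcal C_1}\sum_{j\in[K]}|W_{i,\{j\}}|/B$. *)

theory Defs
  imports Complex_Main
begin

(* <c>_m for c \<ge> 1 : the unique element of {1..m} congruent to c mod m *)
definition cyc :: "nat \<Rightarrow> nat \<Rightarrow> nat" where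
  "cyc c m = (c - 1) mod m + 1"

definition Dset1 :: "nat \<Rightarrow> nat \<Rightarrow> nat \<Rightarrow> nat set" where
  "Dset1 a b k = {(k - 1) * (a + b) + 1 .. k * a + (k - 1) * b}"

definition Dset2 :: "nat \<Rightarrow> nat \<Rightarrow> nat \<Rightarrow> nat set" where
  "Dset2 a b k = {k * a + (k - 1) * b + 1 .. k * (a + b)}"

definition Dset3 :: "nat \<Rightarrow> nat \<Rightarrow> nat \<Rightarrow> nat \<Rightarrow> nat set" where
  "Dset3 K a b k = Dset1 a b (cyc (k + 1) K)"

definition Dset :: "nat \<Rightarrow> nat \<Rightarrow> nat \<Rightarrow> nat \<Rightarrow> nat set" where
  "Dset K a b k = Dset1 a b k \<union> Dset2 a b k \<union> Dset3 K a b k"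

definition C1 :: "nat \<Rightarrow> nat \<Rightarrow> nat \<Rightarrow> nat set" where
  "C1 K a b = (\<Union>k\<in>{1..K}. Dset1 a b k)"

definition C2 :: "nat \<Rightarrow> nat \<Rightarrow> nat \<Rightarrow> nat set" where
  "C2 K a b = (\<Union>k\<in>{1..K}. Dset2 a b k)"

(* A file library: W i j is bit j (j < B) of file i (1 \<le> i \<le> N); all other entries are False. *)
definition valid_lib :: "nat \<Rightarrow> nat \<Rightarrow> (nat \<Rightarrow> nat \<Rightarrow> bool) \<Rightarrow> bool" where
  "valid_lib N B W \<longleftrightarrow> (\<forall>i j. (i \<notin> {1..N} \<or> B \<le> j) \<longrightarrow> W i j = False)"

definition valid_demand :: "nat \<Rightarrow> nat \<Rightarrow> nat \<Rightarrow> (nat \<Rightarrow> nat) \<Rightarrow> bool" where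
  "valid_demand K a b d \<longleftrightarrow> (\<forall>k\<in>{1..K}. d k \<in> Dset K a b k)"

definition cache :: "(nat \<Rightarrow> (nat \<times> nat) set) \<Rightarrow> nat \<Rightarrow> (nat \<Rightarrow> nat \<Rightarrow> bool)
                      \<Rightarrow> (nat \<times> nat) \<Rightarrow> bool" where
  "cache S k W = (\<lambda>p. if p \<in> S k then W (fst p) (snd p) else False)"

(* A scheme with uncoded placement S for the (K,a,b) problem, B bits per file,
   cache size M (M*B bits), broadcast messages of L bits (load R = L/B),
   encoder psi and decoders dec. *)
definition uncoded_scheme ::
  "nat \<Rightarrow> nat \<Rightarrow> nat \<Rightarrow> nat \<Rightarrow> real \<Rightarrow> nat \<Rightarrow> (nat \<Rightarrow> (nat \<times> nat) set)
   \<Rightarrow> ((nat \<Rightarrow> nat) \<Rightarrow> (nat \<Rightarrow> nat \<Rightarrow> bool) \<Rightarrow> bool list)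
   \<Rightarrow> (nat \<Rightarrow> (nat \<Rightarrow> nat) \<Rightarrow> ((nat \<times> nat) \<Rightarrow> bool) \<Rightarrow> bool list \<Rightarrow> nat \<Rightarrow> bool) \<Rightarrow> bool" where
  "uncoded_scheme K a b B M L S psi dec \<longleftrightarrow>
     (\<forall>k\<in>{1..K}. S k \<subseteq> {1..K * (a + b)} \<times> {..<B} \<and> real (card (S k)) \<le> M * real B) \<and>
     (\<forall>d W. valid_demand K a b d \<and> valid_lib (K * (a + b)) B W \<longrightarrow>
        length (psi d W) = L \<and>
        (\<forall>k\<in>{1..K}. \<forall>j<B. dec k d (cache S k W) (psi d W) j = W (d k) j))"

definition Wsub :: "nat \<Rightarrow> nat \<Rightarrow> (nat \<Rightarrow> (nat \<times> nat) set) \<Rightarrow> nat \<Rightarrow> nat set \<Rightarrow> nat set" where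
  "Wsub K B S i T = {j. j < B \<and> (\<forall>k\<in>{1..K}. ((i, j) \<in> S k) = (k \<in> T))}"

definition alpha0 :: "nat \<Rightarrow> nat \<Rightarrow> nat \<Rightarrow> nat \<Rightarrow> (nat \<Rightarrow> (nat \<times> nat) set) \<Rightarrow> real" where
  "alpha0 K a b B S = (\<Sum>i\<in>C1 K a b. real (card (Wsub K B S i {}))) / real B"

definition beta0 :: "nat \<Rightarrow> nat \<Rightarrow> nat \<Rightarrow> nat \<Rightarrow> (nat \<Rightarrow> (nat \<times> nat) set) \<Rightarrow> real" where
  "beta0 K a b B S = (\<Sum>i\<in>C2 K a b. real (card (Wsub K B S i {}))) / real B"

definition alpha1 :: "nat \<Rightarrow> nat \<Rightarrow> nat \<Rightarrow> nat \<Rightarrow> (nat \<Rightarrow> (nat \<times> nat) set) \<Rightarrow> real" where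
  "alpha1 K a b B S =
     (\<Sum>i\<in>C1 K a b. \<Sum>j\<in>{1..K}. real (card (Wsub K B S i {j}))) / real B"

end

theory Submission
  imports Defs
begin

(*
  The argument is a cut-set bound along chains of users. Let users p 0, ..., p (n-1) have
  distinct demands. A genie handing user p i the caches of p 0, ..., p i lets it decode its
  file after the earlier ones, so the broadcast together with these caches determines all
  demanded files; hence the L broadcast bits must cover, for every i, the bits of the i-th
  demanded file stored in none of the caches of p 0, ..., p i. With uncoded placement these
  include the bits cached nowhere and those cached at exactly one node outside the prefix.

  Two families of cyclic chains are used, both ending with a user that asks for a file of
  its own D_{k,2}: walking backwards, every other user asks for a file of its own D_{k,1};
  walking forwards, every other user asks for a file of its successor's D_{k+1,1} = D_{k,3}.
  After averaging over all rotations, the prefixes of the i-th backward step and the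
  (K-2-i)-th forward step are complementary, so every bit of C_1 cached at a single node is
  counted K - 1 times and every uncached one 2(K - 1) times; averaging over the choice of
  files in D_{k,1} and D_{k,2} gives the bound.
*)

section \<open>Enumerating the library\<close>

definition file1 :: "nat \<Rightarrow> nat \<Rightarrow> nat \<Rightarrow> nat \<Rightarrow> nat" where
  "file1 a b u c = (u - 1) * (a + b) + c"

definition file2 :: "nat \<Rightarrow> nat \<Rightarrow> nat \<Rightarrow> nat \<Rightarrow> nat" where
  "file2 a b u e = (u - 1) * (a + b) + a + e"

lemma Dset1_eq_image: "1 \<le> u \<Longrightarrow> Dset1 a b u = file1 a b u ` {1..a}"
proof -
  assume "1 \<le> u"
  then have "u * a + (u - 1) * b = (u - 1) * (a + b) + a"
    by (cases u) (simp_all add: algebra_simps)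
  then show ?thesis
    unfolding Dset1_def file1_def image_add_atLeastAtMost by (simp add: algebra_simps)
qed

lemma Dset2_eq_image: "1 \<le> u \<Longrightarrow> Dset2 a b u = file2 a b u ` {1..b}"
proof -
  assume "1 \<le> u"
  then have "u * a + (u - 1) * b = (u - 1) * (a + b) + a" "u * (a + b) = (u - 1) * (a + b) + a + b"
    by (cases u; simp add: algebra_simps)+
  then show ?thesis
    unfolding Dset2_def file2_def image_add_atLeastAtMost by (simp add: algebra_simps)
qed

lemma mult_add_eq_cancel:
  fixes m m' n x x' :: nat
  assumes "m * n + x = m' * n + x'" "x < n" "x' < n"
  shows "m = m' \<and> x = x'"
proof -
  have "m = (m * n + x) div n" "x = (m * n + x) mod n"
    using assms(2) by simp_all
  moreover have "m' = (m' * n + x') div n" "x' = (m' * n + x') mod n"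
    using assms(3) by simp_all
  ultimately show ?thesis using assms(1) by metis
qed

lemma file1_inj:
  assumes "1 \<le> u" "1 \<le> u'" "c \<in> {1..a}" "c' \<in> {1..a}" "file1 a b u c = file1 a b u' c'"
  shows "u = u' \<and> c = c'"
proof -
  have "(u - 1) * (a + b) + (c - 1) = (u' - 1) * (a + b) + (c' - 1)"
    using assms(3-5) unfolding file1_def by auto
  moreover have "c - 1 < a + b" "c' - 1 < a + b"
    using assms(3,4) by auto
  ultimately have "u - 1 = u' - 1 \<and> c - 1 = c' - 1"
    by (rule mult_add_eq_cancel)
  with assms(1-4) show ?thesis by auto
qed

lemma file2_inj:
  assumes "1 \<le> u" "1 \<le> u'" "e \<in> {1..b}" "e' \<in> {1..b}" "file2 a b u e = file2 a b u' e'"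
  shows "u = u' \<and> e = e'"
proof -
  have "(u - 1) * (a + b) + (a + e - 1) = (u' - 1) * (a + b) + (a + e' - 1)"
    using assms(3-5) unfolding file2_def by auto
  moreover have "a + e - 1 < a + b" "a + e' - 1 < a + b"
    using assms(3,4) by auto
  ultimately have "u - 1 = u' - 1 \<and> a + e - 1 = a + e' - 1"
    by (rule mult_add_eq_cancel)
  with assms(1-4) show ?thesis by auto
qed

lemma file1_neq_file2: "c \<in> {1..a} \<Longrightarrow> e \<in> {1..b} \<Longrightarrow> file1 a b u c \<noteq> file2 a b u' e"
  using mult_add_eq_cancel[of "u - 1" "a + b" "c - 1" "u' - 1" "a + e - 1"]
  unfolding file1_def file2_def by auto

lemma block_le:
  fixes u K a b x :: nat
  assumes "u \<in> {1..K}" "x \<le> a + b"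
  shows "(u - 1) * (a + b) + x \<le> K * (a + b)"
proof -
  have "(u - 1) * (a + b) + x \<le> (u - 1) * (a + b) + (a + b)"
    using assms(2) by simp
  also have "\<dots> = u * (a + b)"
    using assms(1) by (cases u) simp_all
  also have "\<dots> \<le> K * (a + b)"
    using assms(1) by simp
  finally show ?thesis .
qed

lemma Dset1_subset: "u \<in> {1..K} \<Longrightarrow> Dset1 a b u \<subseteq> {1..K * (a + b)}"
proof
  fix x assume u: "u \<in> {1..K}" and "x \<in> Dset1 a b u"
  then obtain c where "c \<in> {1..a}" "x = file1 a b u c"
    using Dset1_eq_image[of u a b] by auto
  with block_le[OF u, of c a b] show "x \<in> {1..K * (a + b)}" by (simp add: file1_def)
qed

lemma Dset2_subset: "u \<in> {1..K} \<Longrightarrow> Dset2 a b u \<subseteq> {1..K * (a + b)}"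
proof
  fix x assume u: "u \<in> {1..K}" and "x \<in> Dset2 a b u"
  then obtain e where "e \<in> {1..b}" "x = file2 a b u e"
    using Dset2_eq_image[of u a b] by auto
  with block_le[OF u, of "a + e" a b] show "x \<in> {1..K * (a + b)}" by (simp add: file2_def)
qed

lemma cyc_in: "0 < K \<Longrightarrow> cyc c K \<in> {1..K}"
  unfolding cyc_def by (simp add: Suc_leI)

lemma Dset_subset: "k \<in> {1..K} \<Longrightarrow> Dset K a b k \<subseteq> {1..K * (a + b)}"
  using Dset1_subset[of k K] Dset2_subset[of k K] Dset1_subset[OF cyc_in[of K "k + 1"]]
  by (auto simp: Dset_def Dset3_def)

lemma sum_C1: "(\<Sum>i\<in>C1 K a b. g i) = (\<Sum>u\<in>{1..K}. \<Sum>c\<in>{1..a}. g (file1 a b u c))"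
proof -
  have "C1 K a b = (\<lambda>(u, c). file1 a b u c) ` ({1..K} \<times> {1..a})"
    by (auto simp: C1_def Dset1_eq_image)
  moreover have "inj_on (\<lambda>(u, c). file1 a b u c) ({1..K} \<times> {1..a})"
  proof (rule inj_onI)
    fix x y assume "x \<in> {1..K} \<times> {1..a}" "y \<in> {1..K} \<times> {1..a}"
      "(\<lambda>(u, c). file1 a b u c) x = (\<lambda>(u, c). file1 a b u c) y"
    then show "x = y"
      using file1_inj[of "fst x" "fst y" "snd x" a "snd y" b] by (auto simp: case_prod_beta prod_eq_iff)
  qed
  ultimately show ?thesis
    by (simp add: sum.reindex sum.cartesian_product prod.case_distrib)
qed

lemma sum_C2: "(\<Sum>i\<in>C2 K a b. g i) = (\<Sum>u\<in>{1..K}. \<Sum>e\<in>{1..b}. g (file2 a b u e))"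
proof -
  have "C2 K a b = (\<lambda>(u, e). file2 a b u e) ` ({1..K} \<times> {1..b})"
    by (auto simp: C2_def Dset2_eq_image)
  moreover have "inj_on (\<lambda>(u, e). file2 a b u e) ({1..K} \<times> {1..b})"
  proof (rule inj_onI)
    fix x y assume "x \<in> {1..K} \<times> {1..b}" "y \<in> {1..K} \<times> {1..b}"
      "(\<lambda>(u, e). file2 a b u e) x = (\<lambda>(u, e). file2 a b u e) y"
    then show "x = y"
      using file2_inj[of "fst x" "fst y" "snd x" b "snd y" a] by (auto simp: case_prod_beta prod_eq_iff)
  qed
  ultimately show ?thesis
    by (simp add: sum.reindex sum.cartesian_product prod.case_distrib)
qed

section \<open>A cut-set bound along a chain of users\<close>

definition uncached :: "nat \<Rightarrow> (nat \<Rightarrow> (nat \<times> nat) set) \<Rightarrow> nat \<Rightarrow> nat set \<Rightarrow> nat set" where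
  "uncached B S f P = {j. j < B \<and> (\<forall>k\<in>P. (f, j) \<notin> S k)}"

definition chain_bits ::
  "nat \<Rightarrow> (nat \<Rightarrow> (nat \<times> nat) set) \<Rightarrow> (nat \<Rightarrow> nat) \<Rightarrow> (nat \<Rightarrow> nat) \<Rightarrow> nat \<Rightarrow> (nat \<times> nat) set" where
  "chain_bits B S d p n = (\<Union>i<n. {d (p i)} \<times> uncached B S (d (p i)) (p ` {..i}))"

lemma card_le_length_if_inj_on_Pow:
  fixes g :: "'a set \<Rightarrow> bool list"
  assumes "finite T" "inj_on g (Pow T)" "\<And>A. A \<subseteq> T \<Longrightarrow> length (g A) = L"
  shows "card T \<le> L"
proof -
  have "g ` Pow T \<subseteq> {xs. set xs \<subseteq> UNIV \<and> length xs = L}"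
    using assms(3) by auto
  then have "card (Pow T) \<le> card {xs. set xs \<subseteq> (UNIV :: bool set) \<and> length xs = L}"
    by (rule card_inj_on_le[OF assms(2)]) (rule finite_lists_length_eq, simp)
  then have "(2::nat) ^ card T \<le> 2 ^ L"
    using assms(1) card_lists_length_eq[of "UNIV :: bool set" L] by (simp add: card_Pow card_UNIV_bool)
  then show ?thesis by simp
qed

lemma cache_of_set: "cache S k (\<lambda>i j. (i, j) \<in> A) = (\<lambda>q. q \<in> S k \<inter> A)"
  by (auto simp: cache_def)

lemma chain_bits_subset:
  assumes "valid_demand K a b d" "p ` {..<n} \<subseteq> {1..K}"
  shows "chain_bits B S d p n \<subseteq> {1..K * (a + b)} \<times> {..<B}"
  using assms Dset_subset unfolding valid_demand_def chain_bits_def uncached_def by blast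

lemma valid_lib_chain_bits:
  assumes "valid_demand K a b d" "p ` {..<n} \<subseteq> {1..K}" "X \<subseteq> chain_bits B S d p n"
  shows "valid_lib (K * (a + b)) B (\<lambda>i j. (i, j) \<in> X)"
proof -
  have "X \<subseteq> {1..K * (a + b)} \<times> {..<B}"
    using assms(3) chain_bits_subset[OF assms(1,2)] by (rule order_trans)
  then show ?thesis by (auto simp: valid_lib_def)
qed

lemma chain_bits_decoded:
  fixes d p :: "nat \<Rightarrow> nat"
  assumes sch: "uncoded_scheme K a b B M L S psi dec"
    and vd: "valid_demand K a b d"
    and users: "p ` {..<n} \<subseteq> {1..K}"
    and A: "A \<subseteq> chain_bits B S d p n" and A': "A' \<subseteq> chain_bits B S d p n"
    and eq: "psi d (\<lambda>i j. (i, j) \<in> A) = psi d (\<lambda>i j. (i, j) \<in> A')"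
  shows "A = A'"
proof -
  have decode: "(d k, j) \<in> X \<longleftrightarrow> dec k d (\<lambda>q. q \<in> S k \<inter> X) (psi d (\<lambda>i j. (i, j) \<in> X)) j"
    if "X \<subseteq> chain_bits B S d p n" "k \<in> {1..K}" "j < B" for X k j
  proof -
    have "dec k d (cache S k (\<lambda>i j. (i, j) \<in> X)) (psi d (\<lambda>i j. (i, j) \<in> X)) j = ((d k, j) \<in> X)"
      using sch vd valid_lib_chain_bits[OF vd users that(1)] that(2,3)
      unfolding uncoded_scheme_def by blast
    then show ?thesis by (simp add: cache_of_set)
  qed
  have "\<forall>j<B. (d (p i), j) \<in> A \<longleftrightarrow> (d (p i), j) \<in> A'" if "i < n" for i
    using that
  proof (induction i rule: less_induct)
    case (less i)
    \<comment> \<open>A bit cached by p i lies in chain_bits only if it belongs to an earlier file of the chain.\<close>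
    have "q \<in> A \<longleftrightarrow> q \<in> A'" if q: "q \<in> S (p i)" "q \<in> chain_bits B S d p n" for q
    proof -
      obtain i' j where i': "i' < n" "q = (d (p i'), j)" "j \<in> uncached B S (d (p i')) (p ` {..i'})"
        using q(2) by (auto simp: chain_bits_def)
      then have "i' < i" "j < B"
        using q(1) by (auto simp: uncached_def not_less)
      then show ?thesis using less.IH i' by blast
    qed
    then have cache_eq: "S (p i) \<inter> A = S (p i) \<inter> A'"
      using A A' by blast
    have "p i \<in> {1..K}"
      using users less.prems by blast
    show ?case
    proof (intro allI impI)
      fix j assume "j < B"
      have "(d (p i), j) \<in> A \<longleftrightarrow> dec (p i) d (\<lambda>q. q \<in> S (p i) \<inter> A) (psi d (\<lambda>i j. (i, j) \<in> A)) j"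
        using decode[OF A \<open>p i \<in> {1..K}\<close> \<open>j < B\<close>] .
      also have "\<dots> \<longleftrightarrow> dec (p i) d (\<lambda>q. q \<in> S (p i) \<inter> A') (psi d (\<lambda>i j. (i, j) \<in> A')) j"
        by (simp only: cache_eq eq)
      also have "\<dots> \<longleftrightarrow> (d (p i), j) \<in> A'"
        using decode[OF A' \<open>p i \<in> {1..K}\<close> \<open>j < B\<close>] by simp
      finally show "(d (p i), j) \<in> A \<longleftrightarrow> (d (p i), j) \<in> A'" .
    qed
  qed
  moreover have "A \<union> A' \<subseteq> (\<Union>i<n. {d (p i)} \<times> {..<B})"
    using A A' by (auto simp: chain_bits_def uncached_def)
  ultimately show "A = A'" by blast
qed

lemma card_chain_bits:
  fixes d p :: "nat \<Rightarrow> nat"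
  assumes "inj_on (\<lambda>i. d (p i)) {..<n}"
  shows "card (chain_bits B S d p n) = (\<Sum>i<n. card (uncached B S (d (p i)) (p ` {..i})))"
  unfolding chain_bits_def using assms
  by (subst card_UN_disjoint) (auto simp: uncached_def inj_on_def card_cartesian_product_singleton)

lemma chain_bound:
  fixes d p :: "nat \<Rightarrow> nat"
  assumes sch: "uncoded_scheme K a b B M L S psi dec"
    and vd: "valid_demand K a b d"
    and users: "p ` {..<n} \<subseteq> {1..K}"
    and inj: "inj_on (\<lambda>i. d (p i)) {..<n}"
  shows "(\<Sum>i<n. card (uncached B S (d (p i)) (p ` {..i}))) \<le> L"
proof -
  have "finite (chain_bits B S d p n)"
    using chain_bits_subset[OF vd users] by (rule finite_subset) simp
  moreover have "inj_on (\<lambda>A. psi d (\<lambda>i j. (i, j) \<in> A)) (Pow (chain_bits B S d p n))"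
    by (rule inj_onI) (rule chain_bits_decoded[OF sch vd users], auto)
  moreover have "length (psi d (\<lambda>i j. (i, j) \<in> A)) = L" if "A \<subseteq> chain_bits B S d p n" for A
    using sch vd valid_lib_chain_bits[OF vd users that] by (simp add: uncoded_scheme_def)
  ultimately have "card (chain_bits B S d p n) \<le> L"
    by (rule card_le_length_if_inj_on_Pow)
  then show ?thesis
    using card_chain_bits[of d p n B S, OF inj] by simp
qed

definition rare_count :: "nat \<Rightarrow> nat \<Rightarrow> (nat \<Rightarrow> (nat \<times> nat) set) \<Rightarrow> nat \<Rightarrow> nat set \<Rightarrow> nat" where
  "rare_count K B S f P = card (Wsub K B S f {}) + (\<Sum>j\<in>{1..K} - P. card (Wsub K B S f {j}))"

lemma Wsub_disjoint:
  "T \<subseteq> {1..K} \<Longrightarrow> T' \<subseteq> {1..K} \<Longrightarrow> T \<noteq> T' \<Longrightarrow> Wsub K B S f T \<inter> Wsub K B S f T' = {}"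
  unfolding Wsub_def by auto

lemma Wsub_subset_uncached:
  "P \<subseteq> {1..K} \<Longrightarrow> T \<inter> P = {} \<Longrightarrow> Wsub K B S f T \<subseteq> uncached B S f P"
  unfolding Wsub_def uncached_def by auto

lemma rare_count_le_uncached:
  assumes P: "P \<subseteq> {1..K}"
  shows "rare_count K B S f P \<le> card (uncached B S f P)"
proof -
  define \<T> where "\<T> = insert {} ((\<lambda>j. {j}) ` ({1..K} - P))"
  have \<T>: "T \<subseteq> {1..K} \<and> T \<inter> P = {}" if "T \<in> \<T>" for T
    using that by (auto simp: \<T>_def)
  have fin: "finite \<T>" "finite (Wsub K B S f T)" for T
    by (auto simp: \<T>_def Wsub_def)
  have "(\<Sum>j\<in>{1..K} - P. card (Wsub K B S f {j}))
      = (\<Sum>T\<in>(\<lambda>j. {j}) ` ({1..K} - P). card (Wsub K B S f T))"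
    by (simp add: sum.reindex inj_on_def)
  then have "rare_count K B S f P = (\<Sum>T\<in>\<T>. card (Wsub K B S f T))"
    unfolding rare_count_def \<T>_def by (subst sum.insert) auto
  also have "\<dots> = card (\<Union>T\<in>\<T>. Wsub K B S f T)"
  proof (rule card_UN_disjoint[symmetric])
    show "\<forall>T\<in>\<T>. \<forall>T'\<in>\<T>. T \<noteq> T' \<longrightarrow> Wsub K B S f T \<inter> Wsub K B S f T' = {}"
      using \<T> by (simp add: Wsub_disjoint)
  qed (simp_all add: fin)
  also have "\<dots> \<le> card (uncached B S f P)"
  proof (rule card_mono)
    show "(\<Union>T\<in>\<T>. Wsub K B S f T) \<subseteq> uncached B S f P"
      using \<T> by (intro UN_least Wsub_subset_uncached[OF P]) simp
  qed (simp add: uncached_def)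
  finally show ?thesis .
qed

lemma rare_count_complement:
  assumes "P \<subseteq> {1..K}"
  shows "rare_count K B S f P + rare_count K B S f ({1..K} - P)
       = 2 * card (Wsub K B S f {}) + (\<Sum>j\<in>{1..K}. card (Wsub K B S f {j}))"
proof -
  have "{1..K} - ({1..K} - P) = P" using assms by blast
  then show ?thesis
    using sum.subset_diff[OF assms, of "\<lambda>j. card (Wsub K B S f {j})"]
    by (simp add: rare_count_def)
qed

section \<open>Cyclic chains of users\<close>

definition user :: "nat \<Rightarrow> nat \<Rightarrow> nat" where
  "user K x = Suc (x mod K)"

definition arc :: "nat \<Rightarrow> nat \<Rightarrow> nat \<Rightarrow> nat set" where
  "arc K x l = (\<lambda>r. user K (x + r)) ` {..<l}"

lemma user_in: "0 < K \<Longrightarrow> user K x \<in> {1..K}"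
  by (simp add: user_def Suc_leI)

lemma user_mod: "user K (x mod K) = user K x"
  by (simp add: user_def)

lemma user_user: "user K (user K x) = user K (Suc x)"
  by (simp add: user_def mod_Suc_eq)

lemma cyc_Suc: "cyc (Suc x) K = user K x"
  by (simp add: cyc_def user_def)

lemma inj_on_user: "inj_on (user K) {x..<x + K}"
proof -
  have "y = z" if yz: "y \<le> z" "x \<le> y" "z < x + K" "y mod K = z mod K" for y z
  proof -
    obtain s where "z = y + K * s"
      using yz(4,1) by (elim mod_eq_nat2E)
    with yz(2,3) show ?thesis by (cases s) auto
  qed
  then show ?thesis
    by (intro inj_onI) (metis Suc_inject atLeastLessThan_iff nat_le_linear user_def)
qed

lemma inj_on_user_shift: "inj_on (\<lambda>r. user K (x + r)) {..<K}"
proof -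
  have "(+) x ` {..<K} = {x..<x + K}"
    by (simp add: lessThan_atLeast0 add.commute)
  then have "inj_on (user K \<circ> (+) x) {..<K}"
    using inj_on_user by (intro comp_inj_on) simp_all
  then show ?thesis by (simp add: comp_def)
qed

lemma arc_subset: "0 < K \<Longrightarrow> arc K x l \<subseteq> {1..K}"
  unfolding arc_def using user_in by blast

lemma arc_full:
  assumes "0 < K"
  shows "arc K x K = {1..K}"
proof (rule card_subset_eq)
  show "card (arc K x K) = card {1..K}"
    unfolding arc_def using card_image[OF inj_on_user_shift[of K x]] by simp
  show "arc K x K \<subseteq> {1..K}"
    by (rule arc_subset[OF assms])
qed simp

lemma arc_complement:
  assumes "0 < K" "l \<le> K"
  shows "{1..K} - arc K x l = arc K (x + l) (K - l)"
proof -
  have "{1..K} - arc K x l = (\<lambda>r. user K (x + r)) ` ({..<K} - {..<l})"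
    unfolding arc_def arc_full[OF assms(1), of x, symmetric]
    by (rule inj_on_image_set_diff[OF inj_on_user_shift, symmetric]) (use assms in auto)
  also have "{..<K} - {..<l} = (+) l ` {..<K - l}"
    using assms(2) by (auto simp: lessThan_atLeast0)
  finally show ?thesis
    by (simp add: arc_def image_image add.assoc)
qed

lemma arc_cong: "x mod K = y mod K \<Longrightarrow> arc K x l = arc K y l"
  unfolding arc_def user_def by (metis mod_add_left_eq)

lemma arc_mod: "arc K (x mod K) l = arc K x l"
  by (rule arc_cong) simp

definition chain_demand :: "nat \<Rightarrow> nat \<Rightarrow> nat \<Rightarrow> (nat \<Rightarrow> nat) \<Rightarrow> nat \<Rightarrow> nat \<Rightarrow> nat \<Rightarrow> nat" where
  "chain_demand a b v \<sigma> c e u = (if u = v then file2 a b u e else file1 a b (\<sigma> u) c)"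

lemma inj_on_chain_demand:
  assumes \<sigma>: "inj_on \<sigma> {1..K}" "\<sigma> ` {1..K} \<subseteq> {1..K}" and c: "c \<in> {1..a}" and e: "e \<in> {1..b}"
  shows "inj_on (chain_demand a b v \<sigma> c e) {1..K}"
proof (rule inj_onI)
  fix u u' assume u: "u \<in> {1..K}" "u' \<in> {1..K}"
    and eq: "chain_demand a b v \<sigma> c e u = chain_demand a b v \<sigma> c e u'"
  have "\<sigma> u \<in> {1..K}" "\<sigma> u' \<in> {1..K}"
    using u \<sigma>(2) by blast+
  then have "\<sigma> u \<ge> 1" "\<sigma> u' \<ge> 1"
    by simp_all
  then have "u \<noteq> v \<Longrightarrow> u' \<noteq> v \<Longrightarrow> \<sigma> u = \<sigma> u'"
    using eq file1_inj[OF _ _ c c] by (simp add: chain_demand_def)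
  moreover have "file1 a b x c \<noteq> file2 a b y e" "file2 a b y e \<noteq> file1 a b x c" for x y
    using file1_neq_file2[OF c e] by metis+
  ultimately show "u = u'"
    using eq u \<sigma>(1) by (auto simp: chain_demand_def inj_on_eq_iff split: if_splits)
qed

lemma chain_rare_count_bound:
  assumes sch: "uncoded_scheme K a b B M L S psi dec" and K: "0 < K"
    and demand: "valid_demand K a b (chain_demand a b v \<sigma> c e)"
    and \<sigma>: "inj_on \<sigma> {1..K}" "\<sigma> ` {1..K} \<subseteq> {1..K}" and c: "c \<in> {1..a}" and e: "e \<in> {1..b}"
    and p: "inj_on p {..<K}" "p ` {..<K} \<subseteq> {1..K}" "p (K - 1) = v"
  shows "(\<Sum>i<K - 1. rare_count K B S (file1 a b (\<sigma> (p i)) c) (p ` {..i}))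
           + card (Wsub K B S (file2 a b v e) {}) \<le> L"
proof -
  let ?d = "chain_demand a b v \<sigma> c e"
  let ?U = "\<lambda>i. card (uncached B S (?d (p i)) (p ` {..i}))"
  have prefix: "p ` {..i} \<subseteq> {1..K}" if "i < K" for i
    using p(2) that by auto
  have "rare_count K B S (file1 a b (\<sigma> (p i)) c) (p ` {..i}) \<le> ?U i" if "i < K - 1" for i
  proof -
    have "i \<noteq> K - 1" "i < K" "K - 1 < K"
      using that K by auto
    then have "p i \<noteq> v"
      unfolding p(3)[symmetric] using inj_on_eq_iff[OF p(1)] by simp
    then show ?thesis
      using rare_count_le_uncached[OF prefix] that by (simp add: chain_demand_def)
  qed
  then have "(\<Sum>i<K - 1. rare_count K B S (file1 a b (\<sigma> (p i)) c) (p ` {..i})) \<le> (\<Sum>i<K - 1. ?U i)"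
    by (intro sum_mono) simp
  moreover have "card (Wsub K B S (file2 a b v e) {}) \<le> ?U (K - 1)"
  proof -
    have "card (Wsub K B S (file2 a b v e) {}) \<le> rare_count K B S (file2 a b v e) (p ` {..K - 1})"
      by (simp add: rare_count_def)
    also have "\<dots> \<le> ?U (K - 1)"
      using rare_count_le_uncached[OF prefix[of "K - 1"]] K p(3) by (simp add: chain_demand_def)
    finally show ?thesis .
  qed
  ultimately have "(\<Sum>i<K - 1. rare_count K B S (file1 a b (\<sigma> (p i)) c) (p ` {..i}))
      + card (Wsub K B S (file2 a b v e) {}) \<le> (\<Sum>i<K - 1. ?U i) + ?U (K - 1)"
    by (rule add_mono)
  also have "\<dots> = (\<Sum>i<K. ?U i)"
    using sum.lessThan_Suc[of ?U "K - 1"] K by simp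
  also have "\<dots> \<le> L"
  proof (rule chain_bound[OF sch demand p(2)])
    show "inj_on (\<lambda>i. ?d (p i)) {..<K}"
      using comp_inj_on[OF p(1) inj_on_subset[OF inj_on_chain_demand[OF \<sigma> c e] p(2)]]
      by (simp add: comp_def)
  qed
  finally show ?thesis .
qed

lemma backward_prefix:
  assumes "i < K"
  shows "(\<lambda>i'. user K (s + (K - i'))) ` {..i} = arc K (s + (K - i)) (Suc i)"
proof -
  have "(\<lambda>i'. user K (s + (K - i'))) ` {..i} = (\<lambda>r. user K (s + (K - i) + r)) ` ((\<lambda>i'. i - i') ` {..i})"
    unfolding image_image by (rule image_cong) (use assms in auto)
  also have "(\<lambda>i'. i - i') ` {..i} = {..<Suc i}"
  proof
    show "{..<Suc i} \<subseteq> (\<lambda>i'. i - i') ` {..i}"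
    proof
      fix r assume "r \<in> {..<Suc i}"
      then have "r = i - (i - r)" "i - r \<in> {..i}" by auto
      then show "r \<in> (\<lambda>i'. i - i') ` {..i}" by (rule image_eqI)
    qed
  qed auto
  finally show ?thesis
    by (simp add: arc_def)
qed

lemma forward_prefix: "(\<lambda>i'. user K (s + i')) ` {..i} = arc K s (Suc i)"
  by (simp add: arc_def lessThan_Suc_atMost)

lemma backward_chain_bound:
  assumes sch: "uncoded_scheme K a b B M L S psi dec" and K: "0 < K"
    and c: "c \<in> {1..a}" and e: "e \<in> {1..b}"
  shows "(\<Sum>i<K - 1. rare_count K B S (file1 a b (user K (s + (K - i))) c) (arc K (s + (K - i)) (Suc i)))
           + card (Wsub K B S (file2 a b (user K (Suc s)) e) {}) \<le> L"
proof -
  define p where "p i = user K (s + (K - i))" for i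
  have "valid_demand K a b (chain_demand a b (user K (Suc s)) id c e)"
    using c e by (auto simp: valid_demand_def chain_demand_def Dset_def Dset1_eq_image Dset2_eq_image)
  moreover have "inj_on p {..<K}"
  proof -
    have "inj_on (\<lambda>i. K - 1 - i) {..<K}" "(\<lambda>i. K - 1 - i) ` {..<K} \<subseteq> {..<K}"
      by (auto simp: inj_on_def)
    then have "inj_on ((\<lambda>r. user K (Suc s + r)) \<circ> (\<lambda>i. K - 1 - i)) {..<K}"
      by (intro comp_inj_on inj_on_subset[OF inj_on_user_shift])
    moreover have "((\<lambda>r. user K (Suc s + r)) \<circ> (\<lambda>i. K - 1 - i)) i = p i" if "i < K" for i
    proof -
      have "Suc s + (K - 1 - i) = s + (K - i)"
        using that by simp
      then show ?thesis
        unfolding comp_def p_def by (rule arg_cong)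
    qed
    ultimately show ?thesis
      by (simp add: inj_on_def)
  qed
  moreover have "p ` {..<K} \<subseteq> {1..K}" "p (K - 1) = user K (Suc s)"
    using user_in[OF K] K by (auto simp: p_def)
  moreover have "p ` {..i} = arc K (s + (K - i)) (Suc i)" if "i < K" for i
    using backward_prefix[OF that] by (simp add: p_def)
  ultimately show ?thesis
    using chain_rare_count_bound[OF sch K _ _ _ c e, of "user K (Suc s)" id p] by (simp add: p_def)
qed

lemma forward_chain_bound:
  assumes sch: "uncoded_scheme K a b B M L S psi dec" and K: "0 < K"
    and c: "c \<in> {1..a}" and e: "e \<in> {1..b}"
  shows "(\<Sum>i<K - 1. rare_count K B S (file1 a b (user K (s + Suc i)) c) (arc K s (Suc i)))
           + card (Wsub K B S (file2 a b (user K (s + (K - 1))) e) {}) \<le> L"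
proof -
  define p where "p i = user K (s + i)" for i
  have "valid_demand K a b (chain_demand a b (user K (s + (K - 1))) (user K) c e)"
    using c e by (auto simp: valid_demand_def chain_demand_def Dset_def Dset3_def cyc_Suc
                             Dset1_eq_image Dset2_eq_image user_def)
  moreover have "inj_on (user K) {1..K}"
    using inj_on_user[of K 1] by (simp add: atLeastLessThanSuc_atLeastAtMost)
  moreover have "user K ` {1..K} \<subseteq> {1..K}" "p ` {..<K} \<subseteq> {1..K}"
    using user_in[OF K] by (auto simp: p_def)
  moreover have "inj_on p {..<K}"
    using inj_on_user_shift[of K s] unfolding p_def[abs_def] .
  moreover have "p ` {..i} = arc K s (Suc i)" for i
    using forward_prefix by (simp add: p_def)
  ultimately show ?thesis
    using chain_rare_count_bound[OF sch K _ _ _ c e, of "user K (s + (K - 1))" "user K" p]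
    by (simp add: p_def user_user)
qed

section \<open>Averaging over rotations\<close>

lemma sum_lessThan_shift_mod:
  fixes g :: "nat \<Rightarrow> 'a::comm_monoid_add"
  assumes "0 < K" "\<And>x. g (x mod K) = g x"
  shows "(\<Sum>s<K. g (s + t)) = (\<Sum>s<K. g s)"
proof -
  have inj: "inj_on (\<lambda>s. (t + s) mod K) {..<K}"
  proof (rule inj_on_imageI2)
    show "inj_on (Suc \<circ> (\<lambda>s. (t + s) mod K)) {..<K}"
      using inj_on_user_shift[of K t] unfolding user_def comp_def .
  qed
  have "(\<lambda>s. (t + s) mod K) ` {..<K} = {..<K}"
    by (rule endo_inj_surj[OF _ _ inj]) (auto simp: assms(1))
  then have "(\<Sum>s<K. g s) = (\<Sum>s<K. g ((t + s) mod K))"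
    using sum.reindex[OF inj, of g] by (simp only: comp_def)
  also have "\<dots> = (\<Sum>s<K. g (s + t))"
    by (simp only: assms(2) add.commute)
  finally show ?thesis ..
qed

lemma sum_user: "(\<Sum>x<K. g (user K x)) = (\<Sum>u\<in>{1..K}. g u)"
proof -
  have "(\<Sum>x<K. g (user K x)) = (\<Sum>x<K. g (Suc x))"
    by (rule sum.cong) (simp_all add: user_def)
  also have "\<dots> = (\<Sum>u\<in>{1..K}. g u)"
    using sum.atLeast1_atMost_eq[of g K] by simp
  finally show ?thesis .
qed

lemma backward_average:
  assumes sch: "uncoded_scheme K a b B M L S psi dec" and K: "0 < K"
    and c: "c \<in> {1..a}" and e: "e \<in> {1..b}"
  shows "(\<Sum>i<K - 1. \<Sum>x<K. rare_count K B S (file1 a b (user K x) c) (arc K x (Suc i)))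
           + (\<Sum>x<K. card (Wsub K B S (file2 a b (user K x) e) {})) \<le> K * L"
proof -
  define G where "G i x = rare_count K B S (file1 a b (user K x) c) (arc K x (Suc i))" for i x
  define Z where "Z x = card (Wsub K B S (file2 a b (user K x) e) {})" for x
  have G_mod: "G i (x mod K) = G i x" and Z_mod: "Z (x mod K) = Z x" for i x
    by (simp_all add: G_def Z_def user_mod arc_mod)
  have "(\<Sum>s<K. \<Sum>i<K - 1. G i (s + (K - i))) = (\<Sum>i<K - 1. \<Sum>s<K. G i (s + (K - i)))"
    by (rule sum.swap)
  also have "\<dots> = (\<Sum>i<K - 1. \<Sum>x<K. G i x)"
  proof (rule sum.cong[OF refl])
    fix i
    show "(\<Sum>s<K. G i (s + (K - i))) = (\<Sum>x<K. G i x)"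
      by (rule sum_lessThan_shift_mod[OF K]) (rule G_mod)
  qed
  finally have "(\<Sum>s<K. (\<Sum>i<K - 1. G i (s + (K - i))) + Z (Suc s))
      = (\<Sum>i<K - 1. \<Sum>x<K. G i x) + (\<Sum>x<K. Z x)"
    using sum_lessThan_shift_mod[of K Z, OF K Z_mod, of 1] by (simp add: sum.distrib)
  moreover have "(\<Sum>s<K. (\<Sum>i<K - 1. G i (s + (K - i))) + Z (Suc s)) \<le> (\<Sum>s<K. L)"
    using backward_chain_bound[OF sch K c e] by (intro sum_mono) (simp add: G_def Z_def)
  ultimately show ?thesis
    by (simp add: G_def Z_def)
qed

lemma forward_average:
  assumes sch: "uncoded_scheme K a b B M L S psi dec" and K: "0 < K"
    and c: "c \<in> {1..a}" and e: "e \<in> {1..b}"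
  shows "(\<Sum>i<K - 1. \<Sum>x<K. rare_count K B S (file1 a b (user K x) c) (arc K (x + (K - Suc i)) (Suc i)))
           + (\<Sum>x<K. card (Wsub K B S (file2 a b (user K x) e) {})) \<le> K * L"
proof -
  define H where "H i x = rare_count K B S (file1 a b (user K x) c) (arc K (x + (K - Suc i)) (Suc i))" for i x
  define Z where "Z x = card (Wsub K B S (file2 a b (user K x) e) {})" for x
  have "arc K (x mod K + (K - Suc i)) (Suc i) = arc K (x + (K - Suc i)) (Suc i)" for i x
    by (rule arc_cong) (simp add: mod_add_left_eq)
  then have H_mod: "H i (x mod K) = H i x" and Z_mod: "Z (x mod K) = Z x" for i x
    by (simp_all add: H_def Z_def user_mod)
  have chain_term: "rare_count K B S (file1 a b (user K (s + Suc i)) c) (arc K s (Suc i)) = H i (s + Suc i)"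
    if "i < K - 1" for s i
  proof -
    have "s + Suc i + (K - Suc i) = s + K"
      using that by simp
    then have "(s + Suc i + (K - Suc i)) mod K = s mod K"
      by simp
    then show ?thesis
      unfolding H_def by (metis arc_cong)
  qed
  have "(\<Sum>s<K. \<Sum>i<K - 1. H i (s + Suc i)) = (\<Sum>i<K - 1. \<Sum>s<K. H i (s + Suc i))"
    by (rule sum.swap)
  also have "\<dots> = (\<Sum>i<K - 1. \<Sum>x<K. H i x)"
  proof (rule sum.cong[OF refl])
    fix i
    show "(\<Sum>s<K. H i (s + Suc i)) = (\<Sum>x<K. H i x)"
      by (rule sum_lessThan_shift_mod[OF K]) (rule H_mod)
  qed
  finally have "(\<Sum>s<K. (\<Sum>i<K - 1. H i (s + Suc i)) + Z (s + (K - 1)))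
      = (\<Sum>i<K - 1. \<Sum>x<K. H i x) + (\<Sum>x<K. Z x)"
    using sum_lessThan_shift_mod[of K Z, OF K Z_mod, of "K - 1"] by (simp add: sum.distrib)
  moreover have "(\<Sum>s<K. (\<Sum>i<K - 1. H i (s + Suc i)) + Z (s + (K - 1))) \<le> (\<Sum>s<K. L)"
  proof (rule sum_mono)
    fix s
    have "(\<Sum>i<K - 1. H i (s + Suc i))
        = (\<Sum>i<K - 1. rare_count K B S (file1 a b (user K (s + Suc i)) c) (arc K s (Suc i)))"
      using chain_term[symmetric] by (intro sum.cong) simp_all
    then show "(\<Sum>i<K - 1. H i (s + Suc i)) + Z (s + (K - 1)) \<le> L"
      using forward_chain_bound[OF sch K c e, of s] by (simp add: Z_def)
  qed
  ultimately show ?thesis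
    by (simp add: H_def Z_def)
qed

lemma rare_count_arc_complement:
  assumes "2 \<le> K" "i < K - 1"
  shows "rare_count K B S f (arc K x (Suc i))
           + rare_count K B S f (arc K (x + (K - Suc (K - 2 - i))) (Suc (K - 2 - i)))
         = 2 * card (Wsub K B S f {}) + (\<Sum>j\<in>{1..K}. card (Wsub K B S f {j}))"
proof -
  have K: "0 < K" using assms(1) by simp
  have "K - Suc (K - 2 - i) = Suc i" "Suc (K - 2 - i) = K - Suc i"
    using assms by auto
  then have "arc K (x + (K - Suc (K - 2 - i))) (Suc (K - 2 - i)) = {1..K} - arc K x (Suc i)"
    using arc_complement[OF K, of "Suc i" x] assms(2) by simp
  then show ?thesis
    using rare_count_complement[OF arc_subset[OF K]] by simp
qed

lemma chains_average_bound:
  assumes sch: "uncoded_scheme K a b B M L S psi dec" and K: "2 \<le> K"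
    and c: "c \<in> {1..a}" and e: "e \<in> {1..b}"
  shows "(K - 1) * (\<Sum>u\<in>{1..K}. 2 * card (Wsub K B S (file1 a b u c) {})
                                 + (\<Sum>j\<in>{1..K}. card (Wsub K B S (file1 a b u c) {j})))
         + 2 * (\<Sum>u\<in>{1..K}. card (Wsub K B S (file2 a b u e) {})) \<le> 2 * K * L"
proof -
  have K0: "0 < K" using K by simp
  define f where "f x = file1 a b (user K x) c" for x
  define G where "G i x = rare_count K B S (f x) (arc K x (Suc i))" for i x
  define H where "H i x = rare_count K B S (f x) (arc K (x + (K - Suc i)) (Suc i))" for i x
  define full where "full x = 2 * card (Wsub K B S (f x) {}) + (\<Sum>j\<in>{1..K}. card (Wsub K B S (f x) {j}))" for x
  define Z where "Z x = card (Wsub K B S (file2 a b (user K x) e) {})" for x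
  have pair: "G i x + H (K - 2 - i) x = full x" if "i < K - 1" for i x
    unfolding G_def H_def full_def by (rule rare_count_arc_complement[OF K that])
  have reverse: "(\<Sum>i<K - 1. H i x) = (\<Sum>i<K - 1. H (K - 2 - i) x)" for x
    using sum.nat_diff_reindex[of "\<lambda>i. H i x" "K - 1"] by (simp add: numeral_2_eq_2)
  have "(\<Sum>i<K - 1. \<Sum>x<K. H i x) = (\<Sum>x<K. \<Sum>i<K - 1. H (K - 2 - i) x)"
    by (subst sum.swap) (simp only: reverse)
  moreover have "(\<Sum>i<K - 1. \<Sum>x<K. G i x) = (\<Sum>x<K. \<Sum>i<K - 1. G i x)"
    by (rule sum.swap)
  ultimately have "(\<Sum>i<K - 1. \<Sum>x<K. G i x) + (\<Sum>i<K - 1. \<Sum>x<K. H i x)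
      = (\<Sum>x<K. \<Sum>i<K - 1. G i x + H (K - 2 - i) x)"
    by (simp only: sum.distrib)
  also have "\<dots> = (\<Sum>x<K. \<Sum>i<K - 1. full x)"
    by (intro sum.cong refl pair) simp
  also have "\<dots> = (K - 1) * (\<Sum>x<K. full x)"
    by (simp add: sum_distrib_left)
  finally have "(K - 1) * (\<Sum>x<K. full x) + 2 * (\<Sum>x<K. Z x) \<le> K * L + K * L"
    using backward_average[OF sch K0 c e] forward_average[OF sch K0 c e]
    unfolding G_def H_def Z_def f_def by linarith
  moreover have "(\<Sum>x<K. full x) = (\<Sum>u\<in>{1..K}. 2 * card (Wsub K B S (file1 a b u c) {})
                                 + (\<Sum>j\<in>{1..K}. card (Wsub K B S (file1 a b u c) {j})))"
    unfolding full_def f_def by (rule sum_user)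
  moreover have "(\<Sum>x<K. Z x) = (\<Sum>u\<in>{1..K}. card (Wsub K B S (file2 a b u e) {}))"
    unfolding Z_def by (rule sum_user)
  ultimately show ?thesis
    by simp
qed

lemma scaled_load_bound:
  assumes sch: "uncoded_scheme K a b B M L S psi dec" and K: "2 \<le> K"
  shows "b * (K - 1) * (2 * (\<Sum>i\<in>C1 K a b. card (Wsub K B S i {}))
                        + (\<Sum>i\<in>C1 K a b. \<Sum>j\<in>{1..K}. card (Wsub K B S i {j})))
         + 2 * a * (\<Sum>i\<in>C2 K a b. card (Wsub K B S i {})) \<le> 2 * a * b * K * L"
proof -
  define X where "X c = (\<Sum>u\<in>{1..K}. 2 * card (Wsub K B S (file1 a b u c) {})
                                   + (\<Sum>j\<in>{1..K}. card (Wsub K B S (file1 a b u c) {j})))" for c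
  define Y where "Y e = (\<Sum>u\<in>{1..K}. card (Wsub K B S (file2 a b u e) {}))" for e
  have "(K - 1) * X c + 2 * Y e \<le> 2 * K * L" if "c \<in> {1..a}" "e \<in> {1..b}" for c e
    unfolding X_def Y_def by (rule chains_average_bound[OF sch K that])
  then have "(\<Sum>c\<in>{1..a}. \<Sum>e\<in>{1..b}. (K - 1) * X c + 2 * Y e) \<le> (\<Sum>c\<in>{1..a}. \<Sum>e\<in>{1..b}. 2 * K * L)"
    by (intro sum_mono) simp
  moreover have "(\<Sum>c\<in>{1..a}. \<Sum>e\<in>{1..b}. (K - 1) * X c + 2 * Y e)
      = b * (K - 1) * (\<Sum>c\<in>{1..a}. X c) + 2 * a * (\<Sum>e\<in>{1..b}. Y e)"
    by (simp add: sum.distrib sum_distrib_left mult.assoc mult.left_commute)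
  moreover have "(\<Sum>c\<in>{1..a}. X c) = 2 * (\<Sum>i\<in>C1 K a b. card (Wsub K B S i {}))
                                    + (\<Sum>i\<in>C1 K a b. \<Sum>j\<in>{1..K}. card (Wsub K B S i {j}))"
    unfolding X_def sum_C1 by (subst sum.swap) (simp add: sum.distrib sum_distrib_left)
  moreover have "(\<Sum>e\<in>{1..b}. Y e) = (\<Sum>i\<in>C2 K a b. card (Wsub K B S i {}))"
    unfolding Y_def sum_C2 by (rule sum.swap)
  ultimately show ?thesis
    by (simp add: mult.assoc)
qed

theorem mainTheorem6:
  fixes K a b B L :: nat and M :: real
    and S :: "nat \<Rightarrow> (nat \<times> nat) set"
    and psi :: "(nat \<Rightarrow> nat) \<Rightarrow> (nat \<Rightarrow> nat \<Rightarrow> bool) \<Rightarrow> bool list"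
    and dec :: "nat \<Rightarrow> (nat \<Rightarrow> nat) \<Rightarrow> ((nat \<times> nat) \<Rightarrow> bool) \<Rightarrow> bool list \<Rightarrow> nat \<Rightarrow> bool"
  assumes "K \<ge> 2" and "a \<ge> 1" and "b \<ge> 1" and "B \<ge> 1"
    and "uncoded_scheme K a b B M L S psi dec"
  shows "real L / real B \<ge>
           real (K - 1) / real (a * K) * alpha0 K a b B S
         + 1 / real (b * K) * beta0 K a b B S
         + real (K - 1) / real (2 * a * K) * alpha1 K a b B S"
proof -
  define A0 where "A0 = (\<Sum>i\<in>C1 K a b. card (Wsub K B S i {}))"
  define A1 where "A1 = (\<Sum>i\<in>C1 K a b. \<Sum>j\<in>{1..K}. card (Wsub K B S i {j}))"
  define B0 where "B0 = (\<Sum>i\<in>C2 K a b. card (Wsub K B S i {}))"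
  have pos: "0 < real a" "0 < real b" "0 < real K" "0 < real B"
    using assms(1-4) by simp_all
  have "b * (K - 1) * (2 * A0 + A1) + 2 * a * B0 \<le> 2 * a * b * K * L"
    using scaled_load_bound[OF assms(5,1)] unfolding A0_def A1_def B0_def .
  then have bound: "real b * real (K - 1) * (2 * real A0 + real A1) + 2 * real a * real B0
      \<le> 2 * real a * real b * real K * real L"
    using of_nat_mono by fastforce
  have "real (K - 1) / real (a * K) * alpha0 K a b B S + 1 / real (b * K) * beta0 K a b B S
        + real (K - 1) / real (2 * a * K) * alpha1 K a b B S
      = (real b * real (K - 1) * (2 * real A0 + real A1) + 2 * real a * real B0)
        / (2 * real a * real b * real K * real B)"
    using pos by (simp add: alpha0_def alpha1_def beta0_def A0_def A1_def B0_def field_simps)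
  also have "\<dots> \<le> (2 * real a * real b * real K * real L) / (2 * real a * real b * real K * real B)"
    by (rule divide_right_mono[OF bound]) (use pos in simp)
  also have "\<dots> = real L / real B"
    using pos by simp
  finally show ?thesis .
qed

end
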